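(* Let $d\ge2$ and $n\ge2$ be integers and let $W=W(D_{n,d};q)$. Then the coefficient sequence $([q^i]W)_{i\ge0}$ is unimodal. Moreover, if $k\ge0$ and $n_k\le n<p_k$, then $[q^{2k}]W$ or $[q^{2k+1}]W$ is a maximum coefficient; if $p_k\le n<n_{k+1}$, then $[q^{2k+2}]W$ is a maximum coefficient and the coefficient sequence is weakly increasing (up to degree $2k+2$).
   Context: For a connected graph $G$, $W(G;q)=\sum_{\{u,v\}}q^{d(u,v)}$ over unordered pairs of distinct vertices, $d$ the graph distance; $[q^i]f$ is the coefficient of $q^i$ in $f$. A sequence $(a_m)_{m\ge0}$ is unimodal if for some index $j$, $a_0\le a_1\le\cdots\le a_j\ge a_{j+1}\ge a_{j+2}\ge\cdots$. The $d$-ary dendrimer $D_{n,d}$ is the tree on vertex set $\{1,\ldots,n\}$ defined inductively: $D_{1,d}$ is the single vertex $1$, and $D_{n,d}$ is obtained from $D_{n-1,d}$ by attaching a new leaf $n$ to the smallest-numbered vertex of $D_{n-1,d}$ having degree $\le d$. Define $n_k=2+(d+1)\frac{d^k-1}{d-1}$, $m_k=3+2d\frac{d^k-1}{d-1}$ and $p_k=m_k+2d^k-1$ for $k\ge0$. *)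

theory Defs
  imports "HOL-Computational_Algebra.Polynomial"
begin

definition gdeg :: "nat set set \<Rightarrow> nat \<Rightarrow> nat" where
  "gdeg E v = card {e \<in> E. v \<in> e}"

fun dendrimer_edges :: "nat \<Rightarrow> nat \<Rightarrow> nat set set" where
  "dendrimer_edges d 0 = {}"
| "dendrimer_edges d (Suc 0) = {}"
| "dendrimer_edges d (Suc (Suc m)) =
     (let E = dendrimer_edges d (Suc m);
          p = (LEAST v. v \<in> {1..Suc m} \<and> gdeg E v \<le> d)
      in insert {p, Suc (Suc m)} E)"

definition adj_rel :: "nat set set \<Rightarrow> (nat \<times> nat) set" where
  "adj_rel E = {(u, v). {u, v} \<in> E \<and> u \<noteq> v}"

definition gdist :: "nat set set \<Rightarrow> nat \<Rightarrow> nat \<Rightarrow> nat" where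
  "gdist E u v = (LEAST k. (u, v) \<in> (adj_rel E) ^^ k)"

definition wiener_poly :: "nat set \<Rightarrow> nat set set \<Rightarrow> nat poly" where
  "wiener_poly V E = (\<Sum>(u, v) \<in> {(u, v). u \<in> V \<and> v \<in> V \<and> u < v}. monom 1 (gdist E u v))"

definition dendrimer_W :: "nat \<Rightarrow> nat \<Rightarrow> nat poly" where
  "dendrimer_W n d = wiener_poly {1..n} (dendrimer_edges d n)"

definition unimodal :: "(nat \<Rightarrow> 'a::linorder) \<Rightarrow> bool" where
  "unimodal a \<longleftrightarrow> (\<exists>j. (\<forall>i<j. a i \<le> a (Suc i)) \<and> (\<forall>i\<ge>j. a (Suc i) \<le> a i))"

definition is_max_coeff :: "nat poly \<Rightarrow> nat \<Rightarrow> bool" where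
  "is_max_coeff p i \<longleftrightarrow> (\<forall>m. coeff p m \<le> coeff p i)"

definition nk :: "nat \<Rightarrow> nat \<Rightarrow> nat" where
  "nk d k = 2 + (d + 1) * ((d ^ k - 1) div (d - 1))"

definition mk :: "nat \<Rightarrow> nat \<Rightarrow> nat" where
  "mk d k = 3 + 2 * d * ((d ^ k - 1) div (d - 1))"

definition pk :: "nat \<Rightarrow> nat \<Rightarrow> nat" where
  "pk d k = mk d k + 2 * d ^ k - 1"

end

theory Submission
  imports Defs
begin

text \<open>
  Number the vertices breadth-first: the root 1 has the children 2, ..., d + 2 and every other
  vertex v the d children d (v - 1) + 3, ..., d (v - 1) + d + 2, which inverts to the parent
  max 1 ((x + d - 3) div d). Then D_{n,d} consists of the first n vertices of the infinite
  dendrimer, and level l \<ge> 1 holds (d + 1) d^(l-1) consecutive vertices. Adding vertex m adds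
  to W the distance profile of m towards the vertices before it. For m at offset p in level
  k + 1 this profile is explicit: the earlier levels contribute d^s at distance 2s + 1 \<le> 2k + 1
  and d^(s-1) at distance 2s \<le> 2k, and the vertices of level k + 1 before m contribute at
  distance 2s those whose path to m turns at height s, a number read off from the residues of
  p modulo powers of d.

  Summing these profiles while level k + 1 fills up, the coefficients of W increase up to
  degree 2k and vanish beyond 2k + 2, while [q^(2k+1)] = (p + 1) d^k and
  [q^(2k+2)] = d^k \<Sum>_{x \<le> p} \<lfloor>x / d^k\<rfloor>. The latter catches up with the former exactly
  when p + 1 \<ge> 3 d^k, i.e. n \<ge> p_k, and from then on also [q^(2k)] \<le> [q^(2k+1)], by a
  periodicity estimate for the residue sums in [q^(2k)]. Once the level is complete, this
  keeps the coefficients increasing below the new top degrees.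
\<close>

section \<open>Breadth-first numbering of the dendrimer\<close>

definition dparent :: "nat \<Rightarrow> nat \<Rightarrow> nat" where
  "dparent d x = max 1 ((x + d - 3) div d)"

lemma dparent_less: "2 \<le> x \<Longrightarrow> dparent d x < x"
proof -
  assume x: "2 \<le> x"
  have "(x + d - 3) div d < x"
  proof (cases "d = 0")
    case True then show ?thesis using x by simp
  next
    case False
    have "x + d - 3 < d * x" using x False
      by (cases x; cases d) (auto simp: algebra_simps)
    then show ?thesis using False by (simp add: div_less_iff_less_mult mult.commute)
  qed
  then show ?thesis using x by (simp add: dparent_def)
qed

lemma one_le_dparent: "1 \<le> dparent d x"
  by (simp add: dparent_def)

lemma dparent_mono: "x \<le> y \<Longrightarrow> dparent d x \<le> dparent d y"
  unfolding dparent_def by (intro max.mono div_le_mono) auto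

lemma div_eq_iff_bounds: "0 < (b::nat) \<Longrightarrow> a div b = q \<longleftrightarrow> q * b \<le> a \<and> a < Suc q * b"
proof -
  assume b: "0 < b"
  have "a div b = q \<longleftrightarrow> q \<le> a div b \<and> \<not> Suc q \<le> a div b"
    by arith
  then show ?thesis
    using less_eq_div_iff_mult_less_eq[OF b] by (auto simp del: mult_Suc)
qed

lemma dparent_eq_1_iff: "2 \<le> d \<Longrightarrow> 2 \<le> x \<Longrightarrow> dparent d x = 1 \<longleftrightarrow> x \<le> d + 2"
proof -
  assume d: "2 \<le> d" and x: "2 \<le> x"
  have "(x + d - 3) div d \<le> 1 \<longleftrightarrow> x + d - 3 < 2 * d"
    using d less_eq_div_iff_mult_less_eq[of d 2 "x + d - 3"] by auto
  then show ?thesis using d x unfolding dparent_def by auto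
qed

lemma dparent_eq_iff:
  assumes d: "2 \<le> d" and v: "2 \<le> v"
  shows "dparent d x = v \<longleftrightarrow> d * (v - 1) + 3 \<le> x \<and> x \<le> d * (v - 1) + d + 2"
proof -
  obtain w where w: "v = Suc (Suc w)" using v by (metis add_2_eq_Suc le_Suc_ex)
  have "dparent d x = v \<longleftrightarrow> (x + d - 3) div d = v" using v unfolding dparent_def by auto
  also have "\<dots> \<longleftrightarrow> v * d \<le> x + d - 3 \<and> x + d - 3 < Suc v * d"
    using d by (simp add: div_eq_iff_bounds)
  also have "\<dots> \<longleftrightarrow> d * (v - 1) + 3 \<le> x \<and> x \<le> d * (v - 1) + d + 2"
    using d unfolding w by (auto simp: algebra_simps)
  finally show ?thesis .
qed

lemma dchildren_eq:
  "2 \<le> d \<Longrightarrow> 1 \<le> v \<Longrightarrow> {x. 2 \<le> x \<and> dparent d x = v} =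
    (if v = 1 then {2 .. d + 2} else {d * (v - 1) + 3 .. d * (v - 1) + d + 2})"
  using dparent_eq_1_iff[of d] dparent_eq_iff[of d v] by (auto simp del: One_nat_def)

lemma card_dchildren:
  "2 \<le> d \<Longrightarrow> 1 \<le> v \<Longrightarrow> card {x. 2 \<le> x \<and> dparent d x = v} = (if v = 1 then d + 1 else d)"
  by (simp add: dchildren_eq)

lemma finite_dchildren: "2 \<le> d \<Longrightarrow> 1 \<le> v \<Longrightarrow> finite {x. 2 \<le> x \<and> dparent d x = v}"
  by (simp add: dchildren_eq)

definition parent_edges :: "nat \<Rightarrow> nat \<Rightarrow> nat set set" where
  "parent_edges d n = (\<lambda>x. {dparent d x, x}) ` {2..n}"

lemma inj_on_parent_edge: "inj_on (\<lambda>x. {dparent d x, x}) {x. 2 \<le> x}"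
proof (rule inj_onI)
  fix x y assume "x \<in> {x. 2 \<le> x}" "y \<in> {x. 2 \<le> x}" "{dparent d x, x} = {dparent d y, y}"
  moreover have "dparent d x < x" "dparent d y < y" using calculation dparent_less by auto
  ultimately show "x = y" by (auto simp: doubleton_eq_iff)
qed

lemma gdeg_parent_edges:
  "gdeg (parent_edges d n) v = card {x \<in> {2..n}. dparent d x = v} + (if 2 \<le> v \<and> v \<le> n then 1 else 0)"
proof -
  let ?X = "{x \<in> {2..n}. dparent d x = v}" and ?Y = "{x \<in> {2..n}. x = v}"
  have "{e \<in> parent_edges d n. v \<in> e} = (\<lambda>x. {dparent d x, x}) ` (?X \<union> ?Y)"
    unfolding parent_edges_def by auto
  moreover have "inj_on (\<lambda>x. {dparent d x, x}) (?X \<union> ?Y)"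
    by (rule inj_on_subset[OF inj_on_parent_edge]) auto
  ultimately have "gdeg (parent_edges d n) v = card (?X \<union> ?Y)"
    unfolding gdeg_def by (simp add: card_image)
  also have "\<dots> = card ?X + card ?Y"
    by (rule card_Un_disjoint) (use dparent_less[of v d] in auto)
  also have "?Y = (if 2 \<le> v \<and> v \<le> n then {v} else {})"
    by auto
  finally show ?thesis by simp
qed

lemma least_unsaturated_eq_dparent:
  assumes d: "2 \<le> d"
  shows "(LEAST v. v \<in> {1..Suc m} \<and> gdeg (parent_edges d (Suc m)) v \<le> d) = dparent d (Suc (Suc m))"
proof (rule Least_equality)
  let ?p = "dparent d (Suc (Suc m))"
  have p1: "1 \<le> ?p" and pt: "?p < Suc (Suc m)"
    using one_le_dparent dparent_less[of "Suc (Suc m)" d] by auto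
  have "card {x \<in> {2..Suc m}. dparent d x = ?p} \<le> card ({x. 2 \<le> x \<and> dparent d x = ?p} - {Suc (Suc m)})"
    by (rule card_mono) (use finite_dchildren[OF d p1] in auto)
  also have "\<dots> = (if ?p = 1 then d + 1 else d) - 1"
    using card_dchildren[OF d p1] by (simp add: card_Diff_singleton)
  finally show "?p \<in> {1..Suc m} \<and> gdeg (parent_edges d (Suc m)) ?p \<le> d"
    using p1 pt d by (auto simp: gdeg_parent_edges split: if_splits)
next
  fix y assume y: "y \<in> {1..Suc m} \<and> gdeg (parent_edges d (Suc m)) y \<le> d"
  show "dparent d (Suc (Suc m)) \<le> y"
  proof (rule ccontr)
    assume "\<not> dparent d (Suc (Suc m)) \<le> y"
    then have "x \<le> Suc m" if "dparent d x = y" for x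
      using that dparent_mono[of "Suc (Suc m)" x d] by (cases "x \<le> Suc m") auto
    then have "{x \<in> {2..Suc m}. dparent d x = y} = {x. 2 \<le> x \<and> dparent d x = y}"
      by auto
    then show False
      using y card_dchildren[OF d, of y] by (auto simp: gdeg_parent_edges split: if_splits)
  qed
qed

lemma dendrimer_edges_eq_parent_edges: "2 \<le> d \<Longrightarrow> dendrimer_edges d n = parent_edges d n"
proof (induction d n rule: dendrimer_edges.induct)
  case (3 d m)
  have "dendrimer_edges d (Suc (Suc m)) = insert {dparent d (Suc (Suc m)), Suc (Suc m)} (parent_edges d (Suc m))"
    using 3 least_unsaturated_eq_dparent[OF "3.prems", of m] by (simp add: Let_def)
  also have "\<dots> = parent_edges d (Suc (Suc m))"
    unfolding parent_edges_def by (auto simp: atLeastAtMostSuc_conv)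
  finally show ?case .
qed (simp_all add: parent_edges_def)

section \<open>Distances\<close>

text \<open>Always the larger endpoint moves to its parent: ancestors carry smaller numbers, so the
  two climbs meet at the lowest common ancestor.\<close>

function tree_dist :: "nat \<Rightarrow> nat \<Rightarrow> nat \<Rightarrow> nat" where
  "tree_dist d u v =
    (if u = v then 0
     else if v < u then (if u \<le> 1 then 0 else Suc (tree_dist d (dparent d u) v))
     else (if v \<le> 1 then 0 else Suc (tree_dist d u (dparent d v))))"
  by auto
termination
  by (relation "measure (\<lambda>(d, u, v). u + v)") (auto intro!: dparent_less)

declare tree_dist.simps [simp del]

lemma tree_dist_sym: "tree_dist d u v = tree_dist d v u"
proof (induction d u v rule: tree_dist.induct)
  case (1 d u v)
  show ?case
    using 1 by (subst (1 2) tree_dist.simps) auto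
qed

lemma tree_dist_self [simp]: "tree_dist d u u = 0"
  by (simp add: tree_dist.simps)

lemma tree_dist_dparent_left: "v < u \<Longrightarrow> 2 \<le> u \<Longrightarrow> tree_dist d u v = Suc (tree_dist d (dparent d u) v)"
  by (subst tree_dist.simps) auto

lemma tree_dist_dparent_right: "u < v \<Longrightarrow> 2 \<le> v \<Longrightarrow> tree_dist d u v = Suc (tree_dist d u (dparent d v))"
  by (subst tree_dist.simps) auto

lemma tree_dist_dparent_step:
  "2 \<le> x \<Longrightarrow> 1 \<le> w \<Longrightarrow>
    tree_dist d (dparent d x) w = Suc (tree_dist d x w) \<or> tree_dist d x w = Suc (tree_dist d (dparent d x) w)"
proof (induction w arbitrary: x rule: less_induct)
  case (less w)
  have px: "dparent d x < x" "1 \<le> dparent d x"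
    using less.prems dparent_less one_le_dparent by auto
  consider "w < x" | "w = x" | "x < w" by linarith
  then show ?case
  proof cases
    case 1
    then show ?thesis using less.prems by (simp add: tree_dist_dparent_left)
  next
    case 2
    then show ?thesis using px less.prems by (simp add: tree_dist_dparent_right)
  next
    case 3
    then have w2: "2 \<le> w" using less.prems by simp
    have "tree_dist d (dparent d x) (dparent d w) = Suc (tree_dist d x (dparent d w))
        \<or> tree_dist d x (dparent d w) = Suc (tree_dist d (dparent d x) (dparent d w))"
      using less.IH[of "dparent d w" x] dparent_less[OF w2] one_le_dparent less.prems by auto
    then show ?thesis
      using 3 px w2 by (simp add: tree_dist_dparent_right)
  qed
qed

lemma adj_rel_parent_edges_iff:
  "(u, v) \<in> adj_rel (parent_edges d n) \<longleftrightarrow>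
    (\<exists>x \<in> {2..n}. (u = dparent d x \<and> v = x) \<or> (u = x \<and> v = dparent d x))"
proof -
  have "(u, v) \<in> adj_rel (parent_edges d n) \<longleftrightarrow> (\<exists>x \<in> {2..n}. {u, v} = {dparent d x, x}) \<and> u \<noteq> v"
    unfolding adj_rel_def parent_edges_def by auto
  also have "\<dots> \<longleftrightarrow> (\<exists>x \<in> {2..n}. (u = dparent d x \<and> v = x) \<or> (u = x \<and> v = dparent d x))"
    using dparent_less[of _ d] by (auto simp: doubleton_eq_iff) (metis less_irrefl)+
  finally show ?thesis .
qed

lemma tree_dist_le_walk:
  "(u, v) \<in> adj_rel (parent_edges d n) ^^ k \<Longrightarrow> 1 \<le> u \<Longrightarrow> tree_dist d u v \<le> k"
proof (induction k arbitrary: v)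
  case (Suc k)
  from Suc.prems(1) obtain y where uy: "(u, y) \<in> adj_rel (parent_edges d n) ^^ k"
    and yv: "(y, v) \<in> adj_rel (parent_edges d n)"
    by (rule relpow_Suc_E)
  from yv obtain x where x: "x \<in> {2..n}"
    and xy: "(y = dparent d x \<and> v = x) \<or> (y = x \<and> v = dparent d x)"
    by (auto simp: adj_rel_parent_edges_iff)
  have "tree_dist d (dparent d x) u = Suc (tree_dist d x u) \<or> tree_dist d x u = Suc (tree_dist d (dparent d x) u)"
    using tree_dist_dparent_step[of x u d] x Suc.prems(2) by auto
  then show ?case
    using xy Suc.IH[OF uy Suc.prems(2)] tree_dist_sym[of d u] by auto
qed simp

lemma walk_tree_dist:
  "u \<in> {1..n} \<Longrightarrow> v \<in> {1..n} \<Longrightarrow> (u, v) \<in> adj_rel (parent_edges d n) ^^ (tree_dist d u v)"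
proof (induction d u v rule: tree_dist.induct)
  case (1 d u v)
  consider "u = v" | "v < u" | "u < v" by linarith
  then show ?case
  proof cases
    case 1
    then show ?thesis by simp
  next
    case 2
    then have u2: "2 \<le> u" using "1.prems" by auto
    have "(u, dparent d u) \<in> adj_rel (parent_edges d n)"
      using u2 "1.prems" by (auto simp: adj_rel_parent_edges_iff)
    moreover have "(dparent d u, v) \<in> adj_rel (parent_edges d n) ^^ tree_dist d (dparent d u) v"
      using "1.IH"(1) 2 u2 "1.prems" dparent_less[OF u2, of d] one_le_dparent[of d u] by auto
    ultimately have "(u, v) \<in> adj_rel (parent_edges d n) ^^ Suc (tree_dist d (dparent d u) v)"
      by (rule relpow_Suc_I2)
    then show ?thesis
      using 2 u2 by (simp only: tree_dist_dparent_left)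
  next
    case 3
    then have v2: "2 \<le> v" using "1.prems" by auto
    have "(u, dparent d v) \<in> adj_rel (parent_edges d n) ^^ tree_dist d u (dparent d v)"
      using "1.IH"(2) 3 v2 "1.prems" dparent_less[OF v2, of d] one_le_dparent[of d v] by auto
    moreover have "(dparent d v, v) \<in> adj_rel (parent_edges d n)"
      using v2 "1.prems" by (auto simp: adj_rel_parent_edges_iff)
    ultimately have "(u, v) \<in> adj_rel (parent_edges d n) ^^ Suc (tree_dist d u (dparent d v))"
      by (rule relpow_Suc_I)
    then show ?thesis
      using 3 v2 by (simp only: tree_dist_dparent_right)
  qed
qed

lemma gdist_parent_edges:
  "u \<in> {1..n} \<Longrightarrow> v \<in> {1..n} \<Longrightarrow> gdist (parent_edges d n) u v = tree_dist d u v"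
  unfolding gdist_def by (rule Least_equality) (auto intro: walk_tree_dist dest: tree_dist_le_walk)

definition dist_count :: "nat \<Rightarrow> nat \<Rightarrow> nat \<Rightarrow> nat" where
  "dist_count d n i = card {(u, v). u \<in> {1..n} \<and> v \<in> {1..n} \<and> u < v \<and> tree_dist d u v = i}"

lemma coeff_wiener_poly:
  assumes V: "finite V"
  shows "coeff (wiener_poly V E) i = card {(u, v). u \<in> V \<and> v \<in> V \<and> u < v \<and> gdist E u v = i}"
proof -
  let ?P = "{(u, v). u \<in> V \<and> v \<in> V \<and> u < v}"
  have fP: "finite ?P"
    by (rule finite_subset[of _ "V \<times> V"]) (use V in auto)
  have "coeff (wiener_poly V E) i = (\<Sum>x \<in> ?P. if gdist E (fst x) (snd x) = i then 1 else 0)"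
    unfolding wiener_poly_def coeff_sum by (intro sum.cong) auto
  also have "\<dots> = card {x \<in> ?P. gdist E (fst x) (snd x) = i}"
    using fP by (simp add: sum.If_cases Int_def)
  also have "{x \<in> ?P. gdist E (fst x) (snd x) = i} = {(u, v). u \<in> V \<and> v \<in> V \<and> u < v \<and> gdist E u v = i}"
    by auto
  finally show ?thesis .
qed

lemma coeff_dendrimer_W: "2 \<le> d \<Longrightarrow> coeff (dendrimer_W n d) = dist_count d n"
proof
  fix i assume d: "2 \<le> d"
  have "coeff (dendrimer_W n d) i =
      card {(u, v). u \<in> {1..n} \<and> v \<in> {1..n} \<and> u < v \<and> gdist (parent_edges d n) u v = i}"
    unfolding dendrimer_W_def dendrimer_edges_eq_parent_edges[OF d] by (simp add: coeff_wiener_poly)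
  also have "\<dots> = dist_count d n i"
    unfolding dist_count_def by (intro arg_cong[where f = card]) (auto simp: gdist_parent_edges)
  finally show "coeff (dendrimer_W n d) i = dist_count d n i" .
qed

lemma dist_count_one_vertex: "dist_count d 1 i = 0"
proof -
  have "{(u, v). u \<in> {1..1} \<and> v \<in> {1..1} \<and> u < v \<and> tree_dist d u v = i} = {}"
    by auto
  then show ?thesis unfolding dist_count_def by (simp only: card.empty)
qed

definition new_dist_count :: "nat \<Rightarrow> nat \<Rightarrow> nat \<Rightarrow> nat" where
  "new_dist_count d m i = card {u. 1 \<le> u \<and> u < m \<and> tree_dist d u m = i}"

lemma dist_count_Suc: "dist_count d (Suc n) = (\<lambda>i. dist_count d n i + new_dist_count d (Suc n) i)"
proof
  fix i
  let ?A = "{(u, v). u \<in> {1..n} \<and> v \<in> {1..n} \<and> u < v \<and> tree_dist d u v = i}"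
  let ?B = "(\<lambda>u. (u, Suc n)) ` {u. 1 \<le> u \<and> u < Suc n \<and> tree_dist d u (Suc n) = i}"
  have "{(u, v). u \<in> {1..Suc n} \<and> v \<in> {1..Suc n} \<and> u < v \<and> tree_dist d u v = i} = ?A \<union> ?B"
    by (auto simp: le_Suc_eq)
  moreover have "finite ?A"
    by (rule finite_subset[of _ "{1..n} \<times> {1..n}"]) auto
  moreover have "finite ?B" "?A \<inter> ?B = {}"
    by auto
  moreover have "card ?B = new_dist_count d (Suc n) i"
    unfolding new_dist_count_def by (rule card_image) (auto simp: inj_on_def)
  ultimately show "dist_count d (Suc n) i = dist_count d n i + new_dist_count d (Suc n) i"
    unfolding dist_count_def by (simp add: card_Un_disjoint)
qed

section \<open>Levels\<close>

fun level_size :: "nat \<Rightarrow> nat \<Rightarrow> nat" where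
  "level_size d 0 = 1"
| "level_size d (Suc l) = (d + 1) * d ^ l"

fun level_start :: "nat \<Rightarrow> nat \<Rightarrow> nat" where
  "level_start d 0 = 1"
| "level_start d (Suc l) = level_start d l + level_size d l"

lemma level_size_pos: "1 \<le> d \<Longrightarrow> 0 < level_size d l"
  by (cases l) auto

lemma strict_mono_level_start: "1 \<le> d \<Longrightarrow> strict_mono (level_start d)"
  by (simp add: strict_mono_Suc_iff level_size_pos)

lemma level_decomp:
  assumes d: "1 \<le> d" and n: "2 \<le> n"
  obtains k p where "n = level_start d (Suc k) + p" and "p < level_size d (Suc k)"
proof -
  define l where "l = (LEAST l. n < level_start d (Suc l))"
  have "n < level_start d (Suc n)"
    using strict_mono_imp_increasing[OF strict_mono_level_start[OF d], of "Suc n"] by simp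
  then have below: "n < level_start d (Suc l)"
    unfolding l_def by (rule LeastI)
  obtain k where k: "l = Suc k"
    using below n by (cases l) auto
  have "\<not> n < level_start d (Suc k)"
    using not_less_Least[of k "\<lambda>l. n < level_start d (Suc l)"] k l_def by simp
  then show ?thesis
    using that[of k "n - level_start d (Suc k)"] below k by simp
qed

lemma level_start_Suc_eq_sum: "level_start d (Suc k) = 2 + (d + 1) * (\<Sum>i<k. d ^ i)"
  by (induction k) (simp_all add: algebra_simps)

lemma diff_1_mult_sum_power: "(d - 1) * (\<Sum>i<k. d ^ i) = d ^ k - (1::nat)"
proof (induction k)
  case (Suc k)
  show ?case
  proof (cases "d = 0")
    case False
    then have "1 \<le> d ^ k" "d ^ k \<le> d * d ^ k" by simp_all
    then show ?thesis using Suc by (simp add: algebra_simps diff_mult_distrib)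
  qed simp
qed simp

lemma nk_eq_level_start: "2 \<le> d \<Longrightarrow> nk d k = level_start d (Suc k)"
  unfolding nk_def level_start_Suc_eq_sum diff_1_mult_sum_power[symmetric] by simp

lemma pk_eq_level_start: "2 \<le> d \<Longrightarrow> pk d k = level_start d (Suc k) + 3 * d ^ k - 1"
proof -
  assume d: "2 \<le> d"
  obtain e where e: "d = Suc e" using d by (cases d) auto
  have geom: "e * (\<Sum>i<k. d ^ i) + 1 = d ^ k"
    using diff_1_mult_sum_power[of d k] e by simp
  have "mk d k = 3 + 2 * d * (\<Sum>i<k. d ^ i)"
    unfolding mk_def diff_1_mult_sum_power[symmetric] using d by simp
  then show ?thesis
    unfolding pk_def level_start_Suc_eq_sum using geom[symmetric] e by (simp add: algebra_simps)
qed

lemma level_start_Suc_add: "1 \<le> k \<Longrightarrow> level_start d (Suc k) + d = d * level_start d k + 3"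
proof -
  assume "1 \<le> k"
  then obtain j where "k = Suc j" by (cases k) auto
  then show ?thesis by (induction j arbitrary: k) (simp_all add: algebra_simps)
qed

lemma level_start_one [simp]: "level_start d (Suc 0) = 2"
  by simp

declare level_start.simps(2) [simp del]

lemma nk_le_pk: "2 \<le> d \<Longrightarrow> nk d k \<le> pk d k"
proof -
  assume d: "2 \<le> d"
  then have "1 \<le> d ^ k" by simp
  then show ?thesis
    using nk_eq_level_start[OF d, of k] pk_eq_level_start[OF d, of k] by simp
qed

lemma pk_le_nk_Suc: "2 \<le> d \<Longrightarrow> pk d k \<le> nk d (Suc k)"
proof -
  assume d: "2 \<le> d"
  have "nk d (Suc k) = level_start d (Suc k) + d ^ k + d * d ^ k"
    using nk_eq_level_start[OF d, of "Suc k"] by (simp add: level_start.simps(2))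
  moreover have "2 * d ^ k \<le> d * d ^ k"
    using d by (rule mult_le_mono1)
  ultimately show ?thesis
    using pk_eq_level_start[OF d, of k] by linarith
qed

lemma nk_level_unique:
  assumes d: "2 \<le> d" and p: "p < level_size d (Suc k)"
    and "nk d j \<le> level_start d (Suc k) + p" and "level_start d (Suc k) + p < nk d (Suc j)"
  shows "j = k"
proof -
  have "level_start d (Suc j) < level_start d (Suc (Suc k))"
    using assms nk_eq_level_start[OF d] by (simp add: level_start.simps(2))
  moreover have "level_start d (Suc k) < level_start d (Suc (Suc j))"
    using assms nk_eq_level_start[OF d] by simp
  ultimately show ?thesis
    using strict_mono_less[OF strict_mono_level_start, of d] d by simp
qed

lemma less_pk_iff: "2 \<le> d \<Longrightarrow> level_start d (Suc k) + p < pk d k \<longleftrightarrow> Suc p < 3 * d ^ k"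
  using pk_eq_level_start[of d k] by (simp add: less_diff_conv)

lemma early_range_iff:
  assumes d: "2 \<le> d" and p: "p < level_size d (Suc k)"
  shows "nk d j \<le> level_start d (Suc k) + p \<and> level_start d (Suc k) + p < pk d j
    \<longleftrightarrow> j = k \<and> Suc p < 3 * d ^ k"
proof
  assume j: "nk d j \<le> level_start d (Suc k) + p \<and> level_start d (Suc k) + p < pk d j"
  then have "level_start d (Suc k) + p < nk d (Suc j)"
    using pk_le_nk_Suc[OF d, of j] by linarith
  then have "j = k"
    using nk_level_unique[OF d p] j by blast
  then show "j = k \<and> Suc p < 3 * d ^ k"
    using j less_pk_iff[OF d] by blast
next
  assume "j = k \<and> Suc p < 3 * d ^ k"
  then show "nk d j \<le> level_start d (Suc k) + p \<and> level_start d (Suc k) + p < pk d j"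
    using nk_eq_level_start[OF d] less_pk_iff[OF d] by simp
qed

lemma late_range_iff:
  assumes d: "2 \<le> d" and p: "p < level_size d (Suc k)"
  shows "pk d j \<le> level_start d (Suc k) + p \<and> level_start d (Suc k) + p < nk d (j + 1)
    \<longleftrightarrow> j = k \<and> 3 * d ^ k \<le> Suc p"
proof
  assume j: "pk d j \<le> level_start d (Suc k) + p \<and> level_start d (Suc k) + p < nk d (j + 1)"
  then have "nk d j \<le> level_start d (Suc k) + p"
    using nk_le_pk[OF d, of j] by linarith
  then have "j = k"
    using nk_level_unique[OF d p] j by simp
  then show "j = k \<and> 3 * d ^ k \<le> Suc p"
    using j less_pk_iff[OF d, of k p] by simp
next
  assume "j = k \<and> 3 * d ^ k \<le> Suc p"
  then show "pk d j \<le> level_start d (Suc k) + p \<and> level_start d (Suc k) + p < nk d (j + 1)"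
    using nk_eq_level_start[OF d, of "Suc k"] less_pk_iff[OF d, of k p] p
    by (simp add: level_start.simps(2))
qed

lemma dparent_level_start:
  assumes d: "2 \<le> d" and k: "1 \<le> k"
  shows "dparent d (level_start d (Suc k) + y) = level_start d k + y div d"
proof -
  have "level_start d (Suc k) + y + d - 3 = d * level_start d k + y"
    using level_start_Suc_add[OF k, of d] by simp
  then have "(level_start d (Suc k) + y + d - 3) div d = level_start d k + y div d"
    using d by simp
  moreover have "1 \<le> level_start d k"
    using strict_mono_less_eq[OF strict_mono_level_start, of d 0 k] d by simp
  ultimately show ?thesis unfolding dparent_def by simp
qed

lemma dparent_level_one: "2 \<le> d \<Longrightarrow> y < d + 1 \<Longrightarrow> dparent d (level_start d 1 + y) = 1"
  using dparent_eq_1_iff[of d "2 + y"] by simp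

lemma tree_dist_both_dparent:
  assumes "u \<noteq> w" "2 \<le> u" "2 \<le> w" "dparent d u < w" "dparent d w < u"
  shows "tree_dist d u w = Suc (Suc (tree_dist d (dparent d u) (dparent d w)))"
proof (cases "w < u")
  case True
  then show ?thesis using assms by (simp add: tree_dist_dparent_left tree_dist_dparent_right)
next
  case False
  then have "u < w" using assms by simp
  then show ?thesis using assms by (simp add: tree_dist_dparent_left tree_dist_dparent_right)
qed

text \<open>For offsets x and y within level l, the parents have offsets x div d and y div d in
  level l - 1; so this is the height above level l where the paths of the two vertices
  to the root merge.\<close>

fun meet_height :: "nat \<Rightarrow> nat \<Rightarrow> nat \<Rightarrow> nat \<Rightarrow> nat" where
  "meet_height d 0 x y = 0"
| "meet_height d (Suc l) x y = (if x = y then 0 else Suc (meet_height d l (x div d) (y div d)))"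

lemma meet_height_le: "meet_height d l x y \<le> l"
  by (induction l arbitrary: x y) auto

lemma meet_height_le_iff:
  "0 < d \<Longrightarrow> meet_height d l x y \<le> s \<longleftrightarrow> l \<le> s \<or> x div d ^ s = y div d ^ s"
proof (induction l arbitrary: x y s)
  case (Suc l)
  show ?case
  proof (cases s)
    case (Suc s')
    have "x div d ^ s = x div d div d ^ s'" "y div d ^ s = y div d div d ^ s'"
      unfolding Suc by (simp_all add: div_mult2_eq)
    then show ?thesis using Suc.IH[OF Suc.prems, of "x div d" "y div d" s'] Suc by auto
  qed simp
qed simp

lemma tree_dist_same_level:
  assumes d: "2 \<le> d"
  shows "x < level_size d l \<Longrightarrow> y < level_size d l \<Longrightarrow>
    tree_dist d (level_start d l + x) (level_start d l + y) = 2 * meet_height d l x y"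
proof (induction l arbitrary: x y)
  case (Suc l)
  let ?u = "level_start d (Suc l) + x" and ?w = "level_start d (Suc l) + y"
  have u2: "2 \<le> ?u" "2 \<le> ?w"
    using strict_mono_less_eq[OF strict_mono_level_start, of d 1 "Suc l"] d by simp_all
  show ?case
  proof (cases "x = y")
    case False
    show ?thesis
    proof (cases l)
      case 0
      have "dparent d ?u = 1" "dparent d ?w = 1"
        using dparent_level_one[OF d] Suc.prems 0 by auto
      then have "tree_dist d ?u ?w = 2"
        using tree_dist_both_dparent[of ?u ?w d] u2 False by simp
      then show ?thesis using 0 False by simp
    next
      case (Suc j)
      then have l1: "1 \<le> l" by simp
      have p: "dparent d ?u = level_start d l + x div d" "dparent d ?w = level_start d l + y div d"
        using dparent_level_start[OF d l1] by auto
      have "level_size d (Suc l) = level_size d l * d"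
        using Suc by (simp add: algebra_simps)
      then have xd: "x div d < level_size d l" "y div d < level_size d l"
        using Suc.prems d by (simp_all add: div_less_iff_less_mult)
      have "tree_dist d ?u ?w = Suc (Suc (tree_dist d (dparent d ?u) (dparent d ?w)))"
        by (rule tree_dist_both_dparent) (use u2 p xd False in \<open>auto simp: level_start.simps(2)\<close>)
      then show ?thesis using Suc.IH[OF xd] p False by simp
    qed
  qed simp
qed simp

lemma card_le_Suc_diff:
  fixes f :: "nat \<Rightarrow> nat"
  shows "card {x. x < N \<and> f x = Suc s} = card {x. x < N \<and> f x \<le> Suc s} - card {x. x < N \<and> f x \<le> s}"
proof -
  have "{x. x < N \<and> f x = Suc s} = {x. x < N \<and> f x \<le> Suc s} - {x. x < N \<and> f x \<le> s}"
    by auto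
  moreover have "{x. x < N \<and> f x \<le> s} \<subseteq> {x. x < N \<and> f x \<le> Suc s}"
    by auto
  ultimately show ?thesis by (simp add: card_Diff_subset)
qed

lemma card_div_fiber: "0 < (B::nat) \<Longrightarrow> card {x. x < N \<and> x div B = Q} = min N (Q * B + B) - Q * B"
proof -
  assume B: "0 < B"
  have "{x. x < N \<and> x div B = Q} = {Q * B ..< min N (Q * B + B)}"
    using B by (auto simp: div_eq_iff_bounds)
  then show ?thesis by simp
qed

lemma card_meet_height_le:
  assumes d: "2 \<le> d" and y: "y < level_size d l"
  shows "card {x. x < level_size d l \<and> meet_height d l x y \<le> s} = (if s < l then d ^ s else level_size d l)"
proof (cases "s < l")
  case True
  then obtain j where j: "l = Suc j" and sj: "s \<le> j" by (cases l) auto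
  have B: "0 < d ^ s" using d by simp
  have "d ^ s dvd level_size d l"
    using j sj by (simp add: le_imp_power_dvd)
  then obtain c where c: "level_size d l = d ^ s * c" ..
  then have "y div d ^ s < c"
    using y B by (simp add: div_less_iff_less_mult mult.commute)
  then have "y div d ^ s * d ^ s + d ^ s \<le> level_size d l"
    using c mult_le_mono1[of "Suc (y div d ^ s)" c "d ^ s"] by (simp add: mult.commute)
  moreover have "{x. x < level_size d l \<and> meet_height d l x y \<le> s} =
      {x. x < level_size d l \<and> x div d ^ s = y div d ^ s}"
    using meet_height_le_iff[of d l _ y s] d True by auto
  ultimately show ?thesis
    using card_div_fiber[OF B, of "level_size d l" "y div d ^ s"] True by simp
next
  case False
  then have "meet_height d l x y \<le> s" for x
    using meet_height_le[of d l x y] by linarith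
  then show ?thesis using False by simp
qed

definition meet_count :: "nat \<Rightarrow> nat \<Rightarrow> nat \<Rightarrow> nat" where
  "meet_count d l s = (if s = 0 then 1 else if s < l then d ^ s - d ^ (s - 1) else if s = l then d ^ l else 0)"

lemma card_meet_height_eq:
  assumes d: "2 \<le> d" and y: "y < level_size d l"
  shows "card {x. x < level_size d l \<and> meet_height d l x y = s} = meet_count d l s"
proof (cases s)
  case 0
  have "{x. x < level_size d l \<and> meet_height d l x y = s} = {x. x < level_size d l \<and> meet_height d l x y \<le> 0}"
    using 0 by auto
  then show ?thesis
    using card_meet_height_le[OF d y, of 0] 0 by (cases l) (simp_all add: meet_count_def)
next
  case (Suc s')
  have "Suc s' = l \<Longrightarrow> level_size d l - d ^ s' = d ^ l"
    by auto
  then show ?thesis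
    using Suc card_le_Suc_diff[of "level_size d l" "\<lambda>x. meet_height d l x y" s']
      card_meet_height_le[OF d y] by (simp add: meet_count_def)
qed

lemma card_meet_height_le_prefix:
  assumes d: "2 \<le> d"
  shows "card {x. x < p \<and> meet_height d l x p \<le> s} = (if l \<le> s then p else p mod d ^ s)"
proof (cases "l \<le> s")
  case True
  then have "meet_height d l x p \<le> s" for x
    using meet_height_le[of d l x p] by linarith
  then show ?thesis using True by simp
next
  case False
  have B: "0 < d ^ s" using d by simp
  have "{x. x < p \<and> meet_height d l x p \<le> s} = {x. x < p \<and> x div d ^ s = p div d ^ s}"
    using meet_height_le_iff[of d l _ p s] d False by auto
  moreover have "p < p div d ^ s * d ^ s + d ^ s"
    using B by (metis add_less_cancel_left div_mult_mod_eq mod_less_divisor)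
  ultimately show ?thesis
    using card_div_fiber[OF B, of p "p div d ^ s"] False by (simp add: minus_div_mult_eq_mod)
qed

lemma card_meet_height_eq_prefix:
  assumes d: "2 \<le> d" and l: "1 \<le> l"
  shows "card {x. x < p \<and> meet_height d l x p = s} =
    (if s = 0 then 0
     else (if l \<le> s then p else p mod d ^ s) - (if l \<le> s - 1 then p else p mod d ^ (s - 1)))"
proof (cases s)
  case 0
  then have "{x. x < p \<and> meet_height d l x p = s} = {x. x < p \<and> meet_height d l x p \<le> 0}"
    by auto
  then show ?thesis using card_meet_height_le_prefix[OF d, of p l 0] 0 l by simp
next
  case (Suc s')
  then show ?thesis
    using card_le_Suc_diff[of p "\<lambda>x. meet_height d l x p" s'] card_meet_height_le_prefix[OF d] by simp
qed

section \<open>Residue sums\<close>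

lemma mod_diff_mod_le:
  assumes B: "0 < (B::nat)" and d: "0 < d"
  shows "p mod (d * B) - p mod B \<le> d * B - B"
proof -
  let ?a = "p mod (d * B)"
  have "p mod B = ?a mod B"
    by (simp add: mod_mod_cancel)
  moreover have "?a - ?a mod B = ?a div B * B"
    by (simp add: minus_mod_eq_div_mult)
  moreover have "?a div B < d"
    using B d by (simp add: div_less_iff_less_mult)
  then have "?a div B * B \<le> (d - 1) * B"
    by (intro mult_le_mono1) simp
  ultimately show ?thesis by (simp add: diff_mult_distrib)
qed

lemma sum_lessThan_add:
  fixes f :: "nat \<Rightarrow> 'a::comm_monoid_add"
  shows "(\<Sum>x<a + b. f x) = (\<Sum>x<a. f x) + (\<Sum>x<b. f (a + x))"
  by (induction b) (simp_all add: add.assoc)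

lemma sum_lessThan_periodic:
  fixes f :: "nat \<Rightarrow> nat"
  assumes "\<And>x. f (D + x) = f x"
  shows "(\<Sum>x<c * D + t. f x) = c * (\<Sum>x<D. f x) + (\<Sum>x<t. f x)"
proof (induction c)
  case (Suc c)
  have "(\<Sum>x<Suc c * D + t. f x) = (\<Sum>x<D + (c * D + t). f x)"
    by (simp add: add.assoc)
  also have "\<dots> = (\<Sum>x<D. f x) + (\<Sum>x<c * D + t. f x)"
    unfolding sum_lessThan_add assms ..
  finally show ?case using Suc by simp
qed simp

lemma sum_div_blocks: "0 < (B::nat) \<Longrightarrow> 2 * (\<Sum>x<a * B. x div B) = a * (a - 1) * B"
proof (induction a)
  case (Suc a)
  have "(\<Sum>x<B. (a * B + x) div B) = (\<Sum>x<B. a)"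
    by (rule sum.cong) (use Suc.prems in auto)
  then have "(\<Sum>x<Suc a * B. x div B) = (\<Sum>x<a * B. x div B) + B * a"
    using sum_lessThan_add[of "\<lambda>x. x div B" "a * B" B] by (simp add: add.commute)
  then show ?case
    using Suc by (cases a) (simp_all add: algebra_simps)
qed simp

lemma sum_div_lower: "0 < (D::nat) \<Longrightarrow> (r - D) + (r - 2 * D) \<le> (\<Sum>x<r. x div D)"
proof (induction r)
  case (Suc r)
  have "(Suc r - D) + (Suc r - 2 * D) \<le> (r - D) + (r - 2 * D) + r div D"
    using less_eq_div_iff_mult_less_eq[OF Suc.prems, of 1 r]
      less_eq_div_iff_mult_less_eq[OF Suc.prems, of 2 r] by linarith
  then show ?case using Suc by simp
qed simp

lemma sum_div_small: "0 < (D::nat) \<Longrightarrow> r \<le> 3 * D \<Longrightarrow> (\<Sum>x<r. x div D) = (r - D) + (r - 2 * D)"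
proof (induction r)
  case (Suc r)
  have "r div D = (if r < D then 0 else if r < 2 * D then 1 else 2)"
    using Suc.prems by (auto simp: div_eq_iff_bounds not_less)
  then show ?case using Suc by auto
qed simp

lemma sum_mod_diff_period:
  "0 < (B::nat) \<Longrightarrow> 2 * (\<Sum>x<d * B. x mod (d * B) - x mod B) = B * (d * (d - 1) * B)"
proof -
  assume B: "0 < B"
  have "(\<Sum>x<d * B. x mod (d * B) - x mod B) = B * (\<Sum>x<d * B. x div B)"
    unfolding sum_distrib_left by (rule sum.cong) (auto simp: minus_mod_eq_div_mult)
  then show ?thesis
    using sum_div_blocks[OF B, of d] by simp
qed

text \<open>The differences x mod (d B) - x mod B have period d B, and over a full period they sum to
  B^2 d (d - 1) / 2, half of the termwise bound d B - B; three periods then absorb the first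
  sum, which is B^2 d (d + 1) / 2.\<close>

lemma sum_div_mod_blocks_le:
  fixes d B r :: nat
  assumes d: "2 \<le> d" and B: "0 < B" and r: "3 * (d * B) \<le> r"
  shows "(\<Sum>x<(d + 1) * B. x div B * B) + r * B + (\<Sum>x<r. x mod (d * B) - x mod B) \<le> r * (d * B)"
proof -
  let ?f = "\<lambda>x. x mod (d * B) - x mod B"
  obtain t where t: "r = 3 * (d * B) + t"
    using r by (metis le_add_diff_inverse)
  obtain e where e: "d = e + 2"
    using d by (metis add.commute le_add_diff_inverse)
  have "?f (d * B + x) = ?f x" for x
    using mod_mult_self3[of d B x] by simp
  then have "(\<Sum>x<r. ?f x) = 3 * (\<Sum>x<d * B. ?f x) + (\<Sum>x<t. ?f x)"
    unfolding t by (rule sum_lessThan_periodic)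
  moreover have "(\<Sum>x<t. ?f x) \<le> (\<Sum>x<t. d * B - B)"
    by (rule sum_mono) (rule mod_diff_mod_le, use B d in auto)
  ultimately have "2 * (\<Sum>x<r. ?f x) \<le> 3 * (B * (d * (d - 1) * B)) + 2 * (t * ((d - 1) * B))"
    using sum_mod_diff_period[OF B, of d] by (simp add: diff_mult_distrib)
  moreover have "2 * (\<Sum>x<(d + 1) * B. x div B * B) = B * ((d + 1) * d * B)"
    using sum_div_blocks[OF B, of "d + 1"] by (simp add: sum_distrib_right[symmetric])
  moreover have "2 * (r * (d * B)) = B * ((d + 1) * d * B) + 2 * (r * B)
      + 3 * (B * (d * (d - 1) * B)) + 2 * (t * ((d - 1) * B)) + 2 * B * B * e * (e + 2)"
    unfolding t e by (simp add: algebra_simps)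
  ultimately show ?thesis by linarith
qed

section \<open>Distances from a new vertex\<close>

lemma card_interval_split:
  fixes a b c :: nat
  assumes "a \<le> b" "b \<le> c"
  shows "card {u. a \<le> u \<and> u < c \<and> Q u} = card {u. a \<le> u \<and> u < b \<and> Q u} + card {u. b \<le> u \<and> u < c \<and> Q u}"
proof -
  have fin: "finite {u. x \<le> u \<and> u < y \<and> Q u}" for x y
    by (rule finite_subset[of _ "{..<y}"]) auto
  have "{u. a \<le> u \<and> u < c \<and> Q u} = {u. a \<le> u \<and> u < b \<and> Q u} \<union> {u. b \<le> u \<and> u < c \<and> Q u}"
    using assms by auto
  then show ?thesis by (simp add: card_Un_disjoint[OF fin fin] disjoint_iff)
qed

lemma card_interval_shift:
  fixes a N :: nat
  shows "card {u. a \<le> u \<and> u < a + N \<and> Q u} = card {x. x < N \<and> Q (a + x)}"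
proof -
  have "{u. a \<le> u \<and> u < a + N \<and> Q u} = (+) a ` {x. x < N \<and> Q (a + x)}"
  proof (intro equalityI subsetI)
    fix u assume "u \<in> {u. a \<le> u \<and> u < a + N \<and> Q u}"
    then show "u \<in> (+) a ` {x. x < N \<and> Q (a + x)}"
      by (intro image_eqI[of u _ "u - a"]) auto
  qed auto
  then show ?thesis by (simp add: card_image)
qed

definition prior_levels_dist_count :: "nat \<Rightarrow> nat \<Rightarrow> nat \<Rightarrow> nat \<Rightarrow> nat" where
  "prior_levels_dist_count d k m i = card {u. 1 \<le> u \<and> u < level_start d (Suc k) \<and> tree_dist d u m = i}"

lemma card_level_dist_next_level:
  assumes d: "2 \<le> d" and p: "p < level_size d (Suc (Suc k))"
  shows "card {x. x < level_size d (Suc k) \<and>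
      tree_dist d (level_start d (Suc k) + x) (level_start d (Suc (Suc k)) + p) = i} =
    (if odd i then meet_count d (Suc k) (i div 2) else 0)"
proof -
  let ?m = "level_start d (Suc (Suc k)) + p"
  have pm: "dparent d ?m = level_start d (Suc k) + p div d"
    using dparent_level_start[OF d, of "Suc k"] by simp
  have "p div d < level_size d (Suc k)"
    using p d by (simp add: div_less_iff_less_mult algebra_simps)
  moreover have m2: "2 \<le> ?m"
    using strict_mono_less_eq[OF strict_mono_level_start, of d 1 "Suc (Suc k)"] d by simp
  ultimately have "tree_dist d (level_start d (Suc k) + x) ?m = Suc (2 * meet_height d (Suc k) x (p div d))"
    if "x < level_size d (Suc k)" for x
    using that pm tree_dist_dparent_right[of "level_start d (Suc k) + x" ?m d]
      tree_dist_same_level[OF d, of x "Suc k" "p div d"] by (simp add: level_start.simps(2))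
  then have "card {x. x < level_size d (Suc k) \<and> tree_dist d (level_start d (Suc k) + x) ?m = i} =
      card {x. x < level_size d (Suc k) \<and> Suc (2 * meet_height d (Suc k) x (p div d)) = i}"
    by (intro arg_cong[where f = card]) auto
  also have "\<dots> = (if odd i then meet_count d (Suc k) (i div 2) else 0)"
  proof (cases "odd i")
    case True
    then have "{x. x < level_size d (Suc k) \<and> Suc (2 * meet_height d (Suc k) x (p div d)) = i} =
        {x. x < level_size d (Suc k) \<and> meet_height d (Suc k) x (p div d) = i div 2}"
      by (auto elim: oddE)
    then show ?thesis
      using True card_meet_height_eq[OF d \<open>p div d < level_size d (Suc k)\<close>] by simp
  qed auto
  finally show ?thesis .
qed

lemma prior_levels_dist_count_Suc:
  assumes d: "2 \<le> d" and p: "p < level_size d (Suc (Suc k))"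
  shows "prior_levels_dist_count d (Suc k) (level_start d (Suc (Suc k)) + p) i =
    (if i = 0 then 0 else prior_levels_dist_count d k (level_start d (Suc k) + p div d) (i - 1))
    + (if odd i then meet_count d (Suc k) (i div 2) else 0)"
proof -
  let ?m = "level_start d (Suc (Suc k)) + p"
  have m2: "2 \<le> ?m"
    using strict_mono_less_eq[OF strict_mono_level_start, of d 1 "Suc (Suc k)"] d by simp
  have "tree_dist d u ?m = Suc (tree_dist d u (level_start d (Suc k) + p div d))"
    if "u < level_start d (Suc k)" for u
    using that m2 tree_dist_dparent_right[of u ?m d] dparent_level_start[OF d, of "Suc k" p]
    by (simp add: level_start.simps(2))
  then have "card {u. 1 \<le> u \<and> u < level_start d (Suc k) \<and> tree_dist d u ?m = i} =
      (if i = 0 then 0 else prior_levels_dist_count d k (level_start d (Suc k) + p div d) (i - 1))"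
    unfolding prior_levels_dist_count_def by (cases i) (simp_all cong: conj_cong)
  moreover have "1 \<le> level_start d (Suc k)"
    using strict_mono_less_eq[OF strict_mono_level_start, of d 0 "Suc k"] d by simp
  ultimately show ?thesis
    unfolding prior_levels_dist_count_def
    using card_interval_split[of 1 "level_start d (Suc k)" "level_start d (Suc (Suc k))"]
      card_interval_shift[of "level_start d (Suc k)" "level_size d (Suc k)"]
      card_level_dist_next_level[OF d p] by (simp add: level_start.simps(2))
qed

lemma prior_levels_dist_count_eq:
  assumes d: "2 \<le> d"
  shows "p < level_size d (Suc k) \<Longrightarrow> prior_levels_dist_count d k (level_start d (Suc k) + p) i =
    (if 1 \<le> i \<and> i \<le> 2 * k + 1 then d ^ ((i - 1) div 2) else 0)"
proof (induction k arbitrary: p i)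
  case 0
  have "tree_dist d 1 (2 + p) = 1"
    using dparent_level_one[OF d, of p] 0 by (simp add: tree_dist_dparent_right)
  then have "{u. 1 \<le> u \<and> u < 2 \<and> tree_dist d u (2 + p) = i} = (if i = 1 then {1} else {})"
    by (force simp: numeral_2_eq_2 less_Suc_eq)
  then show ?case unfolding prior_levels_dist_count_def by simp
next
  case (Suc k)
  have "p div d < level_size d (Suc k)"
    using Suc.prems d by (simp add: div_less_iff_less_mult algebra_simps)
  note IH = Suc.IH[OF this]
  have dpow: "d ^ (s - 1) \<le> d ^ s" for s
    using d by (simp add: power_increasing)
  consider "i = 0" | s where "i = Suc (2 * s)" | s where "i = Suc (Suc (2 * s))"
    by (metis oddE evenE add.commute plus_1_eq_Suc not0_implies_Suc)
  then show ?case
  proof cases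
    case 2
    then show ?thesis
      using prior_levels_dist_count_Suc[OF d Suc.prems, of i] IH dpow[of s]
      by (cases s) (auto simp: meet_count_def)
  qed (use prior_levels_dist_count_Suc[OF d Suc.prems, of i] IH in auto)
qed

lemma new_dist_count_split:
  assumes d: "2 \<le> d" and p: "p < level_size d (Suc k)"
  shows "new_dist_count d (level_start d (Suc k) + p) i =
    prior_levels_dist_count d k (level_start d (Suc k) + p) i + card {x. x < p \<and> 2 * meet_height d (Suc k) x p = i}"
proof -
  let ?m = "level_start d (Suc k) + p"
  have "tree_dist d (level_start d (Suc k) + x) ?m = 2 * meet_height d (Suc k) x p" if "x < p" for x
    using that p tree_dist_same_level[OF d, of x "Suc k" p] by simp
  then have "card {x. x < p \<and> tree_dist d (level_start d (Suc k) + x) ?m = i} =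
      card {x. x < p \<and> 2 * meet_height d (Suc k) x p = i}"
    by (intro arg_cong[where f = card]) auto
  moreover have "1 \<le> level_start d (Suc k)"
    using strict_mono_less_eq[OF strict_mono_level_start, of d 0 "Suc k"] d by simp
  ultimately show ?thesis
    unfolding new_dist_count_def prior_levels_dist_count_def
    using card_interval_split[of 1 "level_start d (Suc k)" ?m]
      card_interval_shift[of "level_start d (Suc k)" p] by simp
qed

locale level_vertex =
  fixes d k p :: nat
  assumes d: "2 \<le> d" and p: "p < level_size d (Suc k)"
begin

abbreviation m :: nat where
  "m \<equiv> level_start d (Suc k) + p"

lemma new_dist_count_eq:
  "new_dist_count d m i = (if 1 \<le> i \<and> i \<le> 2 * k + 1 then d ^ ((i - 1) div 2) else 0)
     + card {x. x < p \<and> 2 * meet_height d (Suc k) x p = i}"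
  using new_dist_count_split[OF d p] prior_levels_dist_count_eq[OF d p] by simp

lemma new_dist_count_odd: "new_dist_count d m (Suc (2 * s)) = (if s \<le> k then d ^ s else 0)"
proof -
  have "2 * a \<noteq> Suc (2 * s)" for a :: nat
    by presburger
  then show ?thesis
    using new_dist_count_eq[of "Suc (2 * s)"] by (simp del: meet_height.simps)
qed

lemma new_dist_count_even:
  "new_dist_count d m (2 * s) = (if 1 \<le> s \<and> s \<le> k then d ^ (s - 1) else 0) +
     (if s = 0 then 0
      else (if Suc k \<le> s then p else p mod d ^ s) - (if Suc k \<le> s - 1 then p else p mod d ^ (s - 1)))"
proof -
  have "(2 * s - 1) div 2 = s - 1"
    by (cases s) auto
  then show ?thesis
    using new_dist_count_eq[of "2 * s"] card_meet_height_eq_prefix[OF d, of "Suc k" p s] by simp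
qed

lemma new_dist_count_zero: "new_dist_count d m 0 = 0"
  using new_dist_count_even[of 0] by simp

lemma new_dist_count_top_odd: "new_dist_count d m (2 * k + 1) = d ^ k"
  using new_dist_count_odd[of k] by simp

lemma new_dist_count_top_even: "new_dist_count d m (2 * k + 2) = p div d ^ k * d ^ k"
  using new_dist_count_even[of "Suc k"] by (simp add: minus_mod_eq_div_mult)

lemma new_dist_count_below_top:
  "1 \<le> k \<Longrightarrow> new_dist_count d m (2 * k) = d ^ (k - 1) + (p mod d ^ k - p mod d ^ (k - 1))"
  using new_dist_count_even[of k] by simp

lemma new_dist_count_vanish: "2 * k + 3 \<le> i \<Longrightarrow> new_dist_count d m i = 0"
  by (cases "even i")
    (auto elim!: evenE oddE simp: new_dist_count_even new_dist_count_odd)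

lemma new_dist_count_mono: "i < 2 * k \<Longrightarrow> new_dist_count d m i \<le> new_dist_count d m (Suc i)"
proof (cases "even i")
  case True
  assume ik: "i < 2 * k"
  then obtain s where s: "i = 2 * s" and sk: "s < k"
    using True by (auto elim: evenE)
  show ?thesis
  proof (cases s)
    case (Suc t)
    have "new_dist_count d m i = d ^ t + (p mod (d * d ^ t) - p mod d ^ t)"
      using new_dist_count_even[of s] s Suc sk by simp
    also have "\<dots> \<le> d * d ^ t"
    proof -
      have "p mod (d * d ^ t) - p mod d ^ t \<le> d * d ^ t - d ^ t"
        by (rule mod_diff_mod_le) (use d in simp_all)
      moreover have "d ^ t \<le> d * d ^ t"
        using d by simp
      ultimately show ?thesis by linarith
    qed
    also have "\<dots> = new_dist_count d m (Suc i)"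
      using new_dist_count_odd[of s] s Suc sk by simp
    finally show ?thesis .
  qed (use new_dist_count_zero s in simp)
next
  case False
  assume ik: "i < 2 * k"
  then obtain s where s: "i = Suc (2 * s)" and sk: "s < k"
    using False by (auto elim!: oddE)
  then show ?thesis
    using new_dist_count_odd[of s] new_dist_count_even[of "Suc s"] by simp
qed

end

section \<open>Growth of a level\<close>

text \<open>Invariant of the growth of level k + 1: c is meant to be the coefficient sequence of W
  for the tree on the vertices up to level_start d (Suc k) + p.\<close>

definition profile :: "nat \<Rightarrow> nat \<Rightarrow> nat \<Rightarrow> (nat \<Rightarrow> nat) \<Rightarrow> bool" where
  "profile d k p c \<longleftrightarrow>
    c 0 = 0 \<and> (\<forall>i<2 * k. c i \<le> c (Suc i)) \<and> (\<forall>i\<ge>2 * k + 3. c i = 0) \<and>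
    c (2 * k + 1) = Suc p * d ^ k \<and>
    c (2 * k + 2) = (\<Sum>x<Suc p. x div d ^ k * d ^ k) \<and>
    (1 \<le> k \<longrightarrow> c (2 * k) = (\<Sum>x<level_size d k. x div d ^ (k - 1) * d ^ (k - 1))
                          + Suc p * d ^ (k - 1) + (\<Sum>x<Suc p. x mod d ^ k - x mod d ^ (k - 1)))"

lemma profile_base: "2 \<le> d \<Longrightarrow> profile d 0 0 (dist_count d 2)"
proof -
  assume d: "2 \<le> d"
  interpret level_vertex d 0 0
    using d level_size_pos[of d "Suc 0"] by unfold_locales simp_all
  have "dist_count d 2 = new_dist_count d 2"
    using dist_count_Suc[of d 1] dist_count_one_vertex[of d] by (simp add: numeral_2_eq_2)
  then show ?thesis
    unfolding profile_def
    using new_dist_count_zero new_dist_count_vanish new_dist_count_top_odd new_dist_count_top_even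
    by simp
qed

lemma profile_Suc:
  assumes "level_vertex d k (Suc p)" and c: "profile d k p c"
  shows "profile d k (Suc p) (\<lambda>i. c i + new_dist_count d (level_start d (Suc k) + Suc p) i)"
proof -
  interpret level_vertex d k "Suc p" by fact
  show ?thesis
    using c new_dist_count_zero new_dist_count_mono new_dist_count_vanish new_dist_count_top_odd
      new_dist_count_top_even new_dist_count_below_top
    unfolding profile_def by (simp add: add_mono)
qed

lemma profile_top_fall:
  assumes c: "profile d k p c" and early: "Suc p < 3 * d ^ k"
  shows "c (2 * k + 2) \<le> c (2 * k + 1)"
proof -
  have D: "0 < d ^ k"
    using early by (intro gr0I) simp
  have "c (2 * k + 2) = (\<Sum>x<Suc p. x div d ^ k) * d ^ k"
    using c unfolding profile_def by (simp add: sum_distrib_right del: sum.lessThan_Suc)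
  also have "\<dots> = ((Suc p - d ^ k) + (Suc p - 2 * d ^ k)) * d ^ k"
    using sum_div_small[OF D, of "Suc p"] early by simp
  also have "\<dots> \<le> Suc p * d ^ k"
    using early by (intro mult_le_mono1) linarith
  also have "\<dots> = c (2 * k + 1)"
    using c unfolding profile_def by simp
  finally show ?thesis .
qed

lemma profile_top_rise:
  assumes d: "2 \<le> d" and c: "profile d k p c" and late: "3 * d ^ k \<le> Suc p"
  shows "c (2 * k) \<le> c (2 * k + 1) \<and> c (2 * k + 1) \<le> c (2 * k + 2)"
proof
  have D: "0 < d ^ k"
    using d by simp
  have "Suc p * d ^ k \<le> ((Suc p - d ^ k) + (Suc p - 2 * d ^ k)) * d ^ k"
    using late by (intro mult_le_mono1) linarith
  also have "\<dots> \<le> (\<Sum>x<Suc p. x div d ^ k) * d ^ k"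
    by (intro mult_le_mono1 sum_div_lower[OF D])
  finally show "c (2 * k + 1) \<le> c (2 * k + 2)"
    using c unfolding profile_def by (simp add: sum_distrib_right del: sum.lessThan_Suc)
next
  show "c (2 * k) \<le> c (2 * k + 1)"
  proof (cases k)
    case 0
    then show ?thesis using c unfolding profile_def by simp
  next
    case (Suc j)
    have "c (2 * k) = (\<Sum>x<(d + 1) * d ^ j. x div d ^ j * d ^ j) + Suc p * d ^ j
        + (\<Sum>x<Suc p. x mod (d * d ^ j) - x mod d ^ j)"
      using c Suc unfolding profile_def by simp
    also have "\<dots> \<le> Suc p * (d * d ^ j)"
      by (rule sum_div_mod_blocks_le) (use d late Suc in simp_all)
    also have "\<dots> = c (2 * k + 1)"
      using c Suc unfolding profile_def by simp
    finally show ?thesis .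
  qed
qed

lemma profile_next_level:
  assumes d: "2 \<le> d" and c: "profile d k (level_size d (Suc k) - 1) c"
  shows "profile d (Suc k) 0 (\<lambda>i. c i + new_dist_count d (level_start d (Suc (Suc k))) i)"
proof -
  interpret level_vertex d "Suc k" 0
    using d level_size_pos[of d "Suc (Suc k)"] by unfold_locales simp_all
  have full: "Suc (level_size d (Suc k) - 1) = level_size d (Suc k)"
    using level_size_pos[of d "Suc k"] d by simp
  have "c (2 * k) \<le> c (2 * k + 1) \<and> c (2 * k + 1) \<le> c (2 * k + 2)"
    by (rule profile_top_rise[OF d c]) (use full d in simp)
  then have "\<forall>i<2 * Suc k. c i \<le> c (Suc i)"
    using c unfolding profile_def by (auto simp: less_Suc_eq)
  then show ?thesis
    using c new_dist_count_zero new_dist_count_mono new_dist_count_vanish new_dist_count_top_odd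
      new_dist_count_top_even new_dist_count_below_top
    unfolding profile_def full by (simp add: add_mono del: sum.lessThan_Suc)
qed

lemma profile_dist_count_level:
  assumes d: "2 \<le> d" and start: "profile d k 0 (dist_count d (level_start d (Suc k)))"
  shows "p < level_size d (Suc k) \<Longrightarrow> profile d k p (dist_count d (level_start d (Suc k) + p))"
proof (induction p)
  case (Suc p)
  have "level_vertex d k (Suc p)"
    using d Suc.prems by unfold_locales
  then show ?case
    using profile_Suc Suc dist_count_Suc[of d "level_start d (Suc k) + p"] by simp
qed (use start in simp)

lemma profile_dist_count:
  assumes d: "2 \<le> d"
  shows "p < level_size d (Suc k) \<Longrightarrow> profile d k p (dist_count d (level_start d (Suc k) + p))"
proof (induction k arbitrary: p)
  case 0
  show ?case
    by (rule profile_dist_count_level) (use d profile_base 0 in simp_all)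
next
  case (Suc k)
  let ?n = "level_start d (Suc k) + (level_size d (Suc k) - 1)"
  have "Suc ?n = level_start d (Suc (Suc k))"
    using level_size_pos[of d "Suc k"] d by (simp add: level_start.simps(2))
  moreover have "profile d k (level_size d (Suc k) - 1) (dist_count d ?n)"
    using Suc.IH level_size_pos[of d "Suc k"] d by simp
  ultimately have "profile d (Suc k) 0 (dist_count d (level_start d (Suc (Suc k))))"
    using profile_next_level[OF d] dist_count_Suc[of d ?n] by metis
  then show ?case
    by (rule profile_dist_count_level[OF d _ Suc.prems])
qed

lemma unimodal_peak:
  fixes a :: "nat \<Rightarrow> 'a::linorder"
  assumes up: "\<forall>i<j. a i \<le> a (Suc i)" and down: "\<forall>i\<ge>j. a (Suc i) \<le> a i"
  shows "unimodal a \<and> (\<forall>m. a m \<le> a j)"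
proof -
  have "a m \<le> a j" for m
  proof (cases "m \<le> j")
    case True
    show ?thesis
      by (rule lift_Suc_mono_le_ivl[where N = "{..<j}"]) (use up True in auto)
  next
    case False
    show ?thesis
      by (rule lift_Suc_antimono_le_ivl[where N = "{j..}"]) (use down False in auto)
  qed
  then show ?thesis
    unfolding unimodal_def using up down by blast
qed

lemma profile_unimodal_early:
  assumes c: "profile d k p c" and early: "Suc p < 3 * d ^ k"
  shows "unimodal c \<and> ((\<forall>m. c m \<le> c (2 * k)) \<or> (\<forall>m. c m \<le> c (2 * k + 1)))"
proof -
  have up: "\<forall>i<2 * k. c i \<le> c (Suc i)" and zero: "\<forall>i\<ge>2 * k + 3. c i = 0"
    using c unfolding profile_def by auto
  have down: "c (Suc i) \<le> c i" if "2 * k + 1 \<le> i" for i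
  proof (cases "i = 2 * k + 1")
    case True
    then show ?thesis using profile_top_fall[OF c early] by simp
  qed (use that zero in simp)
  show ?thesis
  proof (cases "c (2 * k) \<le> c (2 * k + 1)")
    case True
    then have "\<forall>i<2 * k + 1. c i \<le> c (Suc i)"
      using up by (auto simp: less_Suc_eq)
    then show ?thesis
      using unimodal_peak down by blast
  next
    case False
    have "c (Suc i) \<le> c i" if "2 * k \<le> i" for i
      using that down[of i] False by (cases "i = 2 * k") auto
    then show ?thesis
      using unimodal_peak up by blast
  qed
qed

lemma profile_unimodal_late:
  assumes d: "2 \<le> d" and c: "profile d k p c" and late: "3 * d ^ k \<le> Suc p"
  shows "unimodal c \<and> (\<forall>m. c m \<le> c (2 * k + 2)) \<and> (\<forall>i<2 * k + 2. c i \<le> c (Suc i))"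
proof -
  have "c (2 * k) \<le> c (2 * k + 1)" "c (2 * k + 1) \<le> c (2 * k + 2)"
    using profile_top_rise[OF d c late] by auto
  then have up: "\<forall>i<2 * k + 2. c i \<le> c (Suc i)"
    using c unfolding profile_def by (auto simp: less_Suc_eq)
  moreover have "\<forall>i\<ge>2 * k + 2. c (Suc i) \<le> c i"
    using c unfolding profile_def by auto
  ultimately show ?thesis
    using unimodal_peak by blast
qed

theorem theorem3p3:
  fixes d n :: nat
  assumes "d \<ge> 2" and "n \<ge> 2"
  shows "unimodal (coeff (dendrimer_W n d))
    \<and> (\<forall>k. nk d k \<le> n \<and> n < pk d k \<longrightarrow>
          is_max_coeff (dendrimer_W n d) (2 * k) \<or> is_max_coeff (dendrimer_W n d) (2 * k + 1))
    \<and> (\<forall>k. pk d k \<le> n \<and> n < nk d (k + 1) \<longrightarrow>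
          is_max_coeff (dendrimer_W n d) (2 * k + 2)
          \<and> (\<forall>i < 2 * k + 2. coeff (dendrimer_W n d) i \<le> coeff (dendrimer_W n d) (Suc i)))"
proof -
  have d: "2 \<le> d" by fact
  obtain k p where n: "n = level_start d (Suc k) + p" and p: "p < level_size d (Suc k)"
    using level_decomp[of d n] assms by auto
  have c: "profile d k p (coeff (dendrimer_W n d))"
    using profile_dist_count[OF d p] coeff_dendrimer_W[OF d] n by simp
  show ?thesis
    unfolding is_max_coeff_def early_range_iff[OF d p, folded n] late_range_iff[OF d p, folded n]
    using profile_unimodal_early[OF c] profile_unimodal_late[OF d c]
    by (cases "Suc p < 3 * d ^ k") auto
qed

end
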